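(* Let $1\le s<\infty$, $r>1$, and let $G_1,\dots,G_m\subset\mathbb{R}^n$ be bounded $L^s(\mu)$-averaging domains such that $\bigcup_{i=1}^mG_i$ is connected, where $d\mu=w(z)\,dz$ with $w\in A_r\big(\bigcup_{i=1}^mG_i\big)$. Then $\bigcup_{i=1}^mG_i$ is an $L^s(\mu)$-averaging domain.
   Context: A weight $w\ge0$ satisfies the $A_r$ condition on a domain $\Omega$ ($r>1$), written $w\in A_r(\Omega)$, if $\sup_{B\subset\Omega}\left(\frac{1}{|B|}\int_Bw\,dz\right)\left(\frac{1}{|B|}\int_Bw^{\frac{1}{1-r}}\,dz\right)^{r-1}<\infty$, the supremum over balls $B\subset\Omega$. The measure $\mu$ is $d\mu=w\,dz$. A bounded domain $\Omega$ is $L^s(\mu)$-averaging if there is a constant $C$ such that for all $u\in L^1_{\mathrm{loc}}(\Omega,\mu)$, $\left(\frac{1}{\mu(\Omega)}\int_\Omega|u-u_{\Omega}|^s\,d\mu\right)^{1/s}\le C\left(\sup_{B\subset\Omega}\frac{1}{\mu(B)}\int_B|u-u_B|^s\,d\mu\right)^{1/s}$, where $B$ ranges over open balls in $\Omega$ and $u_E=\frac{1}{\mu(E)}\int_Eu\,d\mu$. *)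

theory Defs
  imports "HOL-Analysis.Analysis"
begin

definition balls_in :: "'a::euclidean_space set \<Rightarrow> 'a set set" where
  "balls_in \<Omega> = {ball c \<rho> | c \<rho>. 0 < \<rho> \<and> ball c \<rho> \<subseteq> \<Omega>}"

definition leb_avg :: "('a::euclidean_space \<Rightarrow> real) \<Rightarrow> 'a set \<Rightarrow> real" where
  "leb_avg f B = (\<integral>x\<in>B. f x \<partial>lebesgue) / measure lebesgue B"

definition A_r_weight :: "real \<Rightarrow> 'a::euclidean_space set \<Rightarrow> ('a \<Rightarrow> real) \<Rightarrow> bool" where
  "A_r_weight r \<Omega> w \<longleftrightarrow>
     (\<forall>x\<in>\<Omega>. 0 \<le> w x) \<and> (AE x in lebesgue. x \<in> \<Omega> \<longrightarrow> 0 < w x) \<and>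
     (\<forall>B\<in>balls_in \<Omega>. set_integrable lebesgue B w \<and>
                       set_integrable lebesgue B (\<lambda>x. w x powr (1 / (1 - r)))) \<and>
     bdd_above ((\<lambda>B. leb_avg w B * (leb_avg (\<lambda>x. w x powr (1 / (1 - r))) B) powr (r - 1))
                ` balls_in \<Omega>)"

definition weighted_measure :: "'a::euclidean_space set \<Rightarrow> ('a \<Rightarrow> real) \<Rightarrow> 'a measure" where
  "weighted_measure \<Omega> w = density lebesgue (\<lambda>x. ennreal (indicator \<Omega> x * w x))"

definition mu_avg :: "'a measure \<Rightarrow> ('a \<Rightarrow> real) \<Rightarrow> 'a set \<Rightarrow> real" where
  "mu_avg M u E = (\<integral>x\<in>E. u x \<partial>M) / measure M E"

definition mu_osc :: "'a measure \<Rightarrow> real \<Rightarrow> ('a \<Rightarrow> real) \<Rightarrow> 'a set \<Rightarrow> ennreal" where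
  "mu_osc M s u E = (\<integral>\<^sup>+x\<in>E. ennreal (\<bar>u x - mu_avg M u E\<bar> powr s) \<partial>M) / emeasure M E"

definition loc_integrable :: "'a measure \<Rightarrow> 'a::euclidean_space set \<Rightarrow> ('a \<Rightarrow> real) \<Rightarrow> bool" where
  "loc_integrable M \<Omega> u \<longleftrightarrow> (\<forall>K. compact K \<and> K \<subseteq> \<Omega> \<longrightarrow> set_integrable M K u)"

text \<open>Bounded L^s(\<mu>)-averaging domain.  The defining inequality
  (A)^(1/s) \<le> C (S)^(1/s) is written in the equivalent form A \<le> C^s S (C \<ge> 0).\<close>
definition Ls_averaging_domain :: "'a measure \<Rightarrow> real \<Rightarrow> 'a::euclidean_space set \<Rightarrow> bool" where
  "Ls_averaging_domain M s \<Omega> \<longleftrightarrow>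
     open \<Omega> \<and> connected \<Omega> \<and> \<Omega> \<noteq> {} \<and> bounded \<Omega> \<and>
     (\<exists>C::real. 0 \<le> C \<and> (\<forall>u. loc_integrable M \<Omega> u \<longrightarrow>
        mu_osc M s u \<Omega> \<le> ennreal (C powr s) * (SUP B\<in>balls_in \<Omega>. mu_osc M s u B)))"

end

theory Submission
  imports Defs
begin

(*
  On each piece G i the oscillation of u is controlled, by hypothesis, by its oscillations
  over balls.  The pieces are open and their union is connected, so any two of them are
  joined by a chain of pieces in which consecutive ones intersect; since w > 0 almost
  everywhere, each such intersection has positive measure.  On an intersection of two
  pieces both averages are good constants, so they differ by a multiple of the local
  oscillations; along the (boundedly long) chains all averages therefore stay within a fixed
  multiple of the local oscillation of the average c over one fixed piece.  This bounds
  the integral of |u - c|^s over the union, and by Jensen's inequality the average over the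
  union is, up to the factor 2^s, as good a constant as c.
*)

section \<open>Elementary inequalities for powers\<close>

lemma powr_tangent_le:
  fixes s y t :: real
  assumes s: "1 \<le> s" and y: "0 \<le> y" and t: "0 \<le> t"
  shows "t powr s + s * t powr (s - 1) * (y - t) \<le> y powr s"
proof (cases "t = 0 \<or> y = 0")
  case True
  have "t powr (s - 1) * t = t powr s"
    using t by (cases "t = 0") (simp_all add: powr_diff)
  then have "t powr s + s * t powr (s - 1) * (0 - t) = (1 - s) * t powr s"
    by (simp add: algebra_simps)
  moreover have "(1 - s) * t powr s \<le> 0"
    using s by (simp add: mult_nonpos_nonneg)
  ultimately show ?thesis
    using True y by auto
next
  case False
  then have tpos: "0 < t" and ypos: "0 < y" using t y by auto
  have "((\<lambda>x. x powr s) has_real_derivative s * t powr (s - 1)) (at t within {0<..})"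
    using has_real_derivative_powr[OF tpos] by (simp add: has_field_derivative_at_within)
  from convex_on_imp_above_tangent[OF powr_convex[OF s] _ _ _ this] tpos ypos
  show ?thesis
    by (simp add: interior_open) (smt (verit))
qed

lemma powr_midpoint_le:
  fixes s x y :: real
  assumes "1 \<le> s" "0 \<le> x" "0 \<le> y"
  shows "2 * ((x + y) / 2) powr s \<le> x powr s + y powr s"
proof -
  let ?t = "(x + y) / 2"
  have "s * ?t powr (s - 1) * (x - ?t) + s * ?t powr (s - 1) * (y - ?t) = 0"
    by (simp add: algebra_simps)
  then show ?thesis
    using powr_tangent_le[of s x ?t] powr_tangent_le[of s y ?t] assms by auto
qed

lemma abs_diff_powr_le:
  fixes s a b c :: real
  assumes s: "1 \<le> s"
  shows "\<bar>a - b\<bar> powr s \<le> 2 powr (s - 1) * (\<bar>a - c\<bar> powr s + \<bar>c - b\<bar> powr s)"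
proof -
  let ?x = "\<bar>a - c\<bar>" and ?y = "\<bar>c - b\<bar>"
  have "\<bar>a - b\<bar> \<le> 2 * ((?x + ?y) / 2)"
    using abs_triangle_ineq[of "a - c" "c - b"] by simp
  then have "\<bar>a - b\<bar> powr s \<le> (2 * ((?x + ?y) / 2)) powr s"
    using s by (intro powr_mono2) auto
  also have "\<dots> = 2 powr (s - 1) * (2 * ((?x + ?y) / 2) powr s)"
    using powr_mult[of 2 "(?x + ?y) / 2" s] by (simp add: powr_diff)
  also have "\<dots> \<le> 2 powr (s - 1) * (?x powr s + ?y powr s)"
    using powr_midpoint_le[OF s, of ?x ?y] by (intro mult_left_mono) auto
  finally show ?thesis .
qed

lemma abs_powr_subgradient_le:
  fixes s t y :: real
  assumes s: "1 \<le> s"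
  shows "\<bar>t\<bar> powr s + s * sgn t * \<bar>t\<bar> powr (s - 1) * (y - t) \<le> \<bar>y\<bar> powr s"
proof -
  have "sgn t * (y - t) \<le> \<bar>y\<bar> - \<bar>t\<bar>"
    by (cases t "0::real" rule: linorder_cases) auto
  then have "s * \<bar>t\<bar> powr (s - 1) * (sgn t * (y - t)) \<le> s * \<bar>t\<bar> powr (s - 1) * (\<bar>y\<bar> - \<bar>t\<bar>)"
    using s by (intro mult_left_mono) auto
  with powr_tangent_le[OF s, of "\<bar>y\<bar>" "\<bar>t\<bar>"] show ?thesis
    by (simp add: mult_ac)
qed

section \<open>Oscillation integrals\<close>

lemma set_integrable_of_powr_integral:
  fixes u :: "'a \<Rightarrow> real"
  assumes s: "1 \<le> s" and u[measurable]: "u \<in> borel_measurable M" and A[measurable]: "A \<in> sets M"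
    and fin: "emeasure M A < \<infinity>"
    and Ls: "(\<integral>\<^sup>+x\<in>A. ennreal (\<bar>u x - c\<bar> powr s) \<partial>M) < \<infinity>"
  shows "set_integrable M A u"
  unfolding set_integrable_def
proof (rule integrableI_bounded)
  have "\<bar>u x\<bar> \<le> \<bar>c\<bar> + 1 + \<bar>u x - c\<bar> powr s" for x
  proof (cases "\<bar>u x - c\<bar> \<le> 1")
    case False
    then have "\<bar>u x - c\<bar> powr 1 \<le> \<bar>u x - c\<bar> powr s"
      using s by (intro powr_mono) auto
    then show ?thesis using False by simp
  qed (smt (verit) powr_ge_zero)
  then have "(\<integral>\<^sup>+x. ennreal (norm (indicator A x *\<^sub>R u x)) \<partial>M)
      \<le> (\<integral>\<^sup>+x. ennreal (\<bar>c\<bar> + 1) * indicator A x + ennreal (\<bar>u x - c\<bar> powr s) * indicator A x \<partial>M)"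
    by (intro nn_integral_mono)
       (auto simp: ennreal_plus[symmetric] simp del: ennreal_plus split: split_indicator)
  also have "\<dots> = ennreal (\<bar>c\<bar> + 1) * emeasure M A + (\<integral>\<^sup>+x\<in>A. ennreal (\<bar>u x - c\<bar> powr s) \<partial>M)"
    by (subst nn_integral_add) (auto simp: nn_integral_cmult_indicator)
  also have "\<dots> < \<infinity>"
    using fin Ls by (simp add: ennreal_mult_less_top)
  finally show "(\<integral>\<^sup>+x. ennreal (norm (indicator A x *\<^sub>R u x)) \<partial>M) < \<infinity>" .
qed simp

lemma nn_set_integral_eq_set_integral_nonneg:
  fixes f :: "'a \<Rightarrow> real"
  assumes "set_integrable M A f" and "\<And>x. 0 \<le> f x"
  shows "(\<integral>\<^sup>+x\<in>A. ennreal (f x) \<partial>M) = ennreal (LINT x:A|M. f x)"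
proof -
  have "(\<integral>\<^sup>+x\<in>A. ennreal (f x) \<partial>M) = (\<integral>\<^sup>+x. ennreal (indicator A x *\<^sub>R f x) \<partial>M)"
    by (intro nn_integral_cong) (auto split: split_indicator)
  also have "\<dots> = ennreal (LINT x:A|M. f x)"
    unfolding set_lebesgue_integral_def
    using assms by (intro nn_integral_eq_integral) (auto simp: set_integrable_def)
  finally show ?thesis .
qed

lemma nn_set_integral_UN_le:
  fixes f :: "'a \<Rightarrow> ennreal"
  assumes I: "finite I" and f[measurable]: "f \<in> borel_measurable M"
    and G: "\<And>i. i \<in> I \<Longrightarrow> G i \<in> sets M"
  shows "(\<integral>\<^sup>+x\<in>(\<Union>i\<in>I. G i). f x \<partial>M) \<le> (\<Sum>i\<in>I. \<integral>\<^sup>+x\<in>G i. f x \<partial>M)"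
proof -
  have "f x * indicator (\<Union>i\<in>I. G i) x \<le> (\<Sum>i\<in>I. f x * indicator (G i) x)" for x
  proof (cases "x \<in> (\<Union>i\<in>I. G i)")
    case True
    then obtain j where j: "j \<in> I" "x \<in> G j" by blast
    then have "f x * indicator (\<Union>i\<in>I. G i) x = f x * indicator (G j) x"
      by (auto simp: indicator_def)
    also have "\<dots> \<le> (\<Sum>i\<in>I. f x * indicator (G i) x)"
      using I j by (intro member_le_sum) auto
    finally show ?thesis .
  qed simp
  then have "(\<integral>\<^sup>+x\<in>(\<Union>i\<in>I. G i). f x \<partial>M) \<le> (\<integral>\<^sup>+x. (\<Sum>i\<in>I. f x * indicator (G i) x) \<partial>M)"
    by (rule nn_integral_mono)
  also have "\<dots> = (\<Sum>i\<in>I. \<integral>\<^sup>+x\<in>G i. f x \<partial>M)"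
    using G by (intro nn_integral_sum) auto
  finally show ?thesis .
qed

lemma nn_set_integral_powr_shift_le:
  fixes u :: "'a \<Rightarrow> real"
  assumes s: "1 \<le> s" and u[measurable]: "u \<in> borel_measurable M" and E[measurable]: "E \<in> sets M"
  shows "(\<integral>\<^sup>+x\<in>E. ennreal (\<bar>u x - c\<bar> powr s) \<partial>M)
     \<le> ennreal (2 powr (s - 1)) * ((\<integral>\<^sup>+x\<in>E. ennreal (\<bar>u x - a\<bar> powr s) \<partial>M)
          + ennreal (\<bar>a - c\<bar> powr s) * emeasure M E)"
proof -
  have "ennreal (\<bar>u x - c\<bar> powr s)
      \<le> ennreal (2 powr (s - 1)) * (ennreal (\<bar>u x - a\<bar> powr s) + ennreal (\<bar>a - c\<bar> powr s))" for x
    using abs_diff_powr_le[OF s, of "u x" c a]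
    by (simp add: ennreal_mult[symmetric] ennreal_plus[symmetric] del: ennreal_plus)
  then have "(\<integral>\<^sup>+x\<in>E. ennreal (\<bar>u x - c\<bar> powr s) \<partial>M)
      \<le> (\<integral>\<^sup>+x. ennreal (2 powr (s - 1)) * (ennreal (\<bar>u x - a\<bar> powr s) * indicator E x
            + ennreal (\<bar>a - c\<bar> powr s) * indicator E x) \<partial>M)"
    by (intro nn_integral_mono) (auto split: split_indicator)
  also have "\<dots> = ennreal (2 powr (s - 1)) * ((\<integral>\<^sup>+x\<in>E. ennreal (\<bar>u x - a\<bar> powr s) \<partial>M)
          + ennreal (\<bar>a - c\<bar> powr s) * emeasure M E)"
    by (simp add: nn_integral_cmult nn_integral_add nn_integral_cmult_indicator)
  finally show ?thesis .
qed

lemma abs_diff_powr_measure_le: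
  fixes u :: "'a \<Rightarrow> real"
  assumes s: "1 \<le> s" and u[measurable]: "u \<in> borel_measurable M"
    and [measurable]: "A \<in> sets M" "E \<in> sets M" "F \<in> sets M" and sub: "A \<subseteq> E" "A \<subseteq> F"
  shows "ennreal (\<bar>a - b\<bar> powr s) * emeasure M A
     \<le> ennreal (2 powr (s - 1)) * ((\<integral>\<^sup>+x\<in>E. ennreal (\<bar>u x - a\<bar> powr s) \<partial>M)
          + (\<integral>\<^sup>+x\<in>F. ennreal (\<bar>u x - b\<bar> powr s) \<partial>M))"
proof -
  have "ennreal (\<bar>a - b\<bar> powr s)
      \<le> ennreal (2 powr (s - 1)) * (ennreal (\<bar>u x - a\<bar> powr s) + ennreal (\<bar>u x - b\<bar> powr s))" for x
    using abs_diff_powr_le[OF s, of a b "u x"]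
    by (simp add: ennreal_mult[symmetric] ennreal_plus[symmetric] abs_minus_commute del: ennreal_plus)
  then have "(\<integral>\<^sup>+x. ennreal (\<bar>a - b\<bar> powr s) * indicator A x \<partial>M)
      \<le> (\<integral>\<^sup>+x. ennreal (2 powr (s - 1)) * (ennreal (\<bar>u x - a\<bar> powr s) * indicator E x
            + ennreal (\<bar>u x - b\<bar> powr s) * indicator F x) \<partial>M)"
    using sub by (intro nn_integral_mono) (auto split: split_indicator)
  then show ?thesis
    by (simp add: nn_integral_cmult nn_integral_add nn_integral_cmult_indicator)
qed

lemma measure_mult_powr_avg_le:
  fixes u :: "'a \<Rightarrow> real"
  assumes s: "1 \<le> s" and A: "A \<in> sets M" "emeasure M A < \<infinity>"
    and u: "set_integrable M A u" and f: "set_integrable M A (\<lambda>x. \<bar>u x - c\<bar> powr s)"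
  shows "measure M A * \<bar>mu_avg M u A - c\<bar> powr s \<le> (LINT x:A|M. \<bar>u x - c\<bar> powr s)"
proof (cases "measure M A = 0")
  case True
  then show ?thesis
    by (simp add: set_lebesgue_integral_def)
next
  case False
  define t where "t = mu_avg M u A - c"
  define g where "g = s * sgn t * \<bar>t\<bar> powr (s - 1)"
  have const: "set_integrable M A (\<lambda>_. a)" "(LINT x:A|M. a) = measure M A * a" for a :: real
    using A set_integral_const[of A M a] unfolding set_integrable_def
    by (auto intro!: integrable_mult_left)
  \<comment> \<open>g is a subgradient of |.|^s at t, and the linear term integrates to 0
     because c + t is the average of u.\<close>
  have "(LINT x:A|M. u x) = measure M A * (t + c)"
    using False by (simp add: t_def mu_avg_def)
  then have "(LINT x:A|M. \<bar>t\<bar> powr s + g * (u x - c - t)) = measure M A * \<bar>t\<bar> powr s"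
    using u const by (simp add: set_integral_add set_integral_diff algebra_simps)
  moreover have "(LINT x:A|M. \<bar>t\<bar> powr s + g * (u x - c - t)) \<le> (LINT x:A|M. \<bar>u x - c\<bar> powr s)"
    using abs_powr_subgradient_le[OF s, of t "u x - c" for x] u f const
    by (intro set_integral_mono) (auto simp: g_def)
  ultimately show ?thesis
    by (simp add: t_def)
qed

lemma nn_set_integral_osc_le:
  fixes u :: "'a \<Rightarrow> real"
  assumes s: "1 \<le> s" and u[measurable]: "u \<in> borel_measurable M" and A[measurable]: "A \<in> sets M"
    and fin: "emeasure M A < \<infinity>"
  shows "(\<integral>\<^sup>+x\<in>A. ennreal (\<bar>u x - mu_avg M u A\<bar> powr s) \<partial>M)
           \<le> ennreal (2 powr s) * (\<integral>\<^sup>+x\<in>A. ennreal (\<bar>u x - c\<bar> powr s) \<partial>M)"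
proof (cases "(\<integral>\<^sup>+x\<in>A. ennreal (\<bar>u x - c\<bar> powr s) \<partial>M) = \<infinity>")
  case True
  then show ?thesis by (simp add: ennreal_mult_top)
next
  case False
  let ?I = "\<integral>\<^sup>+x\<in>A. ennreal (\<bar>u x - c\<bar> powr s) \<partial>M"
  have u_int: "set_integrable M A u"
    using False by (intro set_integrable_of_powr_integral[OF s u A fin]) (simp add: less_top)
  have "(\<integral>\<^sup>+x. ennreal (norm (indicator A x *\<^sub>R \<bar>u x - c\<bar> powr s)) \<partial>M) = ?I"
    by (intro nn_integral_cong) (auto split: split_indicator)
  then have f_int: "set_integrable M A (\<lambda>x. \<bar>u x - c\<bar> powr s)"
    unfolding set_integrable_def using False by (intro integrableI_bounded) (auto simp: less_top)
  have "ennreal (\<bar>c - mu_avg M u A\<bar> powr s) * emeasure M A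
      = ennreal (measure M A * \<bar>mu_avg M u A - c\<bar> powr s)"
    using fin by (simp add: emeasure_eq_ennreal_measure ennreal_mult' abs_minus_commute mult.commute)
  also have "\<dots> \<le> ?I"
    using measure_mult_powr_avg_le[OF s A fin u_int f_int]
    by (simp add: nn_set_integral_eq_set_integral_nonneg[OF f_int] ennreal_leI)
  finally have avg: "ennreal (\<bar>c - mu_avg M u A\<bar> powr s) * emeasure M A \<le> ?I" .
  have "(\<integral>\<^sup>+x\<in>A. ennreal (\<bar>u x - mu_avg M u A\<bar> powr s) \<partial>M)
      \<le> ennreal (2 powr (s - 1)) * (?I + ennreal (\<bar>c - mu_avg M u A\<bar> powr s) * emeasure M A)"
    by (rule nn_set_integral_powr_shift_le[OF s u A])
  also have "\<dots> \<le> ennreal (2 powr (s - 1)) * (?I + ?I)"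
    using avg by (intro mult_left_mono add_left_mono) auto
  also have "\<dots> = ennreal (2 powr (s - 1) * 2) * ?I"
    by (simp add: ennreal_mult mult.assoc flip: mult_2)
  also have "2 powr (s - 1) * 2 = (2 powr s :: real)"
    by (simp add: powr_diff)
  finally show ?thesis .
qed

lemma nn_set_integral_osc_eq:
  assumes "E \<in> sets M" "emeasure M E < \<infinity>"
  shows "(\<integral>\<^sup>+x\<in>E. ennreal (\<bar>u x - mu_avg M u E\<bar> powr s) \<partial>M) = mu_osc M s u E * emeasure M E"
proof (cases "emeasure M E = 0")
  case True
  then have "E \<in> null_sets M"
    using assms by (simp add: null_setsI)
  with True show ?thesis
    by (simp add: nn_integral_null_set)
next
  case False
  then show ?thesis
    using assms unfolding mu_osc_def by (simp add: ennreal_divide_times)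
qed

lemma mu_osc_le_of_nn_set_integral_le:
  assumes fin: "emeasure M E < \<infinity>" and "0 \<le> a"
    and bound: "(\<integral>\<^sup>+x\<in>E. ennreal (\<bar>u x - mu_avg M u E\<bar> powr s) \<partial>M) \<le> ennreal (a * measure M E)"
  shows "mu_osc M s u E \<le> ennreal a"
proof (cases "measure M E = 0")
  case True
  then have "emeasure M E = 0"
    using fin by (simp add: emeasure_eq_ennreal_measure)
  then show ?thesis
    using bound True by (simp add: mu_osc_def)
next
  case False
  then have "0 < measure M E"
    by (simp add: order_less_le)
  have "mu_osc M s u E \<le> ennreal (a * measure M E) / ennreal (measure M E)"
    unfolding mu_osc_def using fin bound
    by (simp add: emeasure_eq_ennreal_measure divide_right_mono_ennreal)
  also have "\<dots> = ennreal a"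
    using \<open>0 < measure M E\<close> \<open>0 \<le> a\<close> by (simp add: divide_ennreal)
  finally show ?thesis .
qed

section \<open>Chains of overlapping pieces\<close>

lemma relpow_dist_le:
  fixes f :: "'i \<Rightarrow> 'b::metric_space"
  assumes step: "\<And>i j. (i, j) \<in> R \<Longrightarrow> dist (f i) (f j) \<le> \<delta>" and "(i, j) \<in> R ^^ n"
  shows "dist (f i) (f j) \<le> n * \<delta>"
  using assms(2)
proof (induction n arbitrary: j)
  case (Suc n)
  then obtain k where "(i, k) \<in> R ^^ n" "(k, j) \<in> R"
    by (auto elim: relpow_Suc_E)
  then show ?case
    using Suc.IH[of k] step[of k j] dist_triangle[of "f i" "f j" "f k"] by (simp add: algebra_simps)
qed simp

definition overlap_rel :: "'i set \<Rightarrow> ('i \<Rightarrow> 'a set) \<Rightarrow> 'i rel" where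
  "overlap_rel I G = {(i, j). i \<in> I \<and> j \<in> I \<and> G i \<inter> G j \<noteq> {}}"

lemma connected_UN_imp_overlap_chain:
  fixes G :: "'i \<Rightarrow> 'a::topological_space set"
  assumes conn: "connected (\<Union>i\<in>I. G i)" and opn: "\<And>i. i \<in> I \<Longrightarrow> open (G i)"
    and ne: "\<And>i. i \<in> I \<Longrightarrow> G i \<noteq> {}" and ij: "i \<in> I" "j \<in> I"
  shows "(i, j) \<in> (overlap_rel I G)\<^sup>*"
proof -
  let ?R = "overlap_rel I G"
  define linked where
    "linked x y \<longleftrightarrow> (\<forall>i\<in>I. \<forall>j\<in>I. x \<in> G i \<longrightarrow> y \<in> G j \<longrightarrow> (i, j) \<in> ?R\<^sup>*)" for x y
  have "sym (?R\<^sup>*)"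
    by (intro sym_rtrancl) (auto simp: sym_def overlap_rel_def)
  obtain a b where ab: "a \<in> G i" "b \<in> G j"
    using ne ij by blast
  have "linked a b"
  proof (rule connected_equivalence_relation[OF conn])
    show "a \<in> (\<Union>i\<in>I. G i)" "b \<in> (\<Union>i\<in>I. G i)"
      using ab ij by auto
    show "linked y x" if "linked x y" for x y
      using that \<open>sym (?R\<^sup>*)\<close> by (auto simp: linked_def dest: symD)
    show "linked x z" if xy: "linked x y" and yz: "linked y z" and y: "y \<in> (\<Union>i\<in>I. G i)"
      for x y z
    proof -
      obtain k where "k \<in> I" "y \<in> G k"
        using y by blast
      then show ?thesis
        using xy yz unfolding linked_def by (meson rtrancl_trans)
    qed
    show "\<exists>T. openin (top_of_set (\<Union>i\<in>I. G i)) T \<and> x \<in> T \<and> (\<forall>y\<in>T. linked x y)"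
      if x: "x \<in> (\<Union>i\<in>I. G i)" for x
    proof -
      obtain k where k: "k \<in> I" "x \<in> G k"
        using x by blast
      have "(i, k) \<in> ?R" "(k, j) \<in> ?R" if "i \<in> I" "j \<in> I" "x \<in> G i" "y \<in> G j" "y \<in> G k" for i j y
        using that k by (auto simp: overlap_rel_def)
      then have "\<forall>y\<in>G k. linked x y"
        unfolding linked_def by (meson r_into_rtrancl rtrancl_into_rtrancl)
      then show ?thesis
        using k opn by (intro exI[of _ "G k"]) (auto intro: open_subset)
    qed
  qed
  then show ?thesis
    using ab ij by (simp add: linked_def)
qed

lemma abs_avg_diff_le_overlap:
  fixes u :: "'a \<Rightarrow> real"
  assumes s: "1 \<le> s" and u: "u \<in> borel_measurable M"
    and [measurable]: "E \<in> sets M" "F \<in> sets M"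
    and pos: "0 < emeasure M (E \<inter> F)" and fin: "emeasure M (E \<inter> F) < \<infinity>" and S: "0 \<le> S"
    and XE: "(\<integral>\<^sup>+x\<in>E. ennreal (\<bar>u x - mu_avg M u E\<bar> powr s) \<partial>M) \<le> ennreal S"
    and XF: "(\<integral>\<^sup>+x\<in>F. ennreal (\<bar>u x - mu_avg M u F\<bar> powr s) \<partial>M) \<le> ennreal S"
  shows "\<bar>mu_avg M u E - mu_avg M u F\<bar> \<le> (2 powr s / measure M (E \<inter> F)) powr (1 / s) * S powr (1 / s)"
proof -
  let ?d = "\<bar>mu_avg M u E - mu_avg M u F\<bar>" and ?\<beta> = "measure M (E \<inter> F)"
  have \<beta>: "emeasure M (E \<inter> F) = ennreal ?\<beta>"
    using fin by (simp add: emeasure_eq_ennreal_measure)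
  have \<beta>_pos: "0 < ?\<beta>"
    using pos \<beta> by simp
  have "ennreal (?d powr s * ?\<beta>) = ennreal (?d powr s) * emeasure M (E \<inter> F)"
    using \<beta> by (simp add: ennreal_mult)
  also have "\<dots> \<le> ennreal (2 powr (s - 1)) * ((\<integral>\<^sup>+x\<in>E. ennreal (\<bar>u x - mu_avg M u E\<bar> powr s) \<partial>M)
      + (\<integral>\<^sup>+x\<in>F. ennreal (\<bar>u x - mu_avg M u F\<bar> powr s) \<partial>M))"
    by (rule abs_diff_powr_measure_le[OF s u]) auto
  also have "\<dots> \<le> ennreal (2 powr (s - 1)) * (ennreal S + ennreal S)"
    using XE XF by (intro mult_left_mono add_mono) auto
  also have "\<dots> = ennreal (2 powr (s - 1) * 2 * S)"
    using S by (simp add: ennreal_mult mult.assoc flip: mult_2)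
  also have "2 powr (s - 1) * 2 = (2 powr s :: real)"
    by (simp add: powr_diff)
  finally have "?d powr s * ?\<beta> \<le> 2 powr s * S"
    using S by (simp add: ennreal_le_iff)
  then have "?d powr s \<le> 2 powr s / ?\<beta> * S"
    using \<beta>_pos by (simp add: pos_le_divide_eq mult.commute mult.left_commute)
  then have "?d \<le> (2 powr s / ?\<beta> * S) powr (1 / s)"
    using s powr_mono2[of "1 / s" "?d powr s"] by (simp add: powr_powr)
  also have "\<dots> = (2 powr s / ?\<beta>) powr (1 / s) * S powr (1 / s)"
    by (rule powr_mult)
  finally show ?thesis .
qed

lemma avg_powr_diff_le_chain:
  fixes M :: "'a measure" and G :: "'i \<Rightarrow> 'a set" and s :: real
  assumes s: "1 \<le> s" and I: "finite I"
    and G[measurable]: "\<And>i. i \<in> I \<Longrightarrow> G i \<in> sets M"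
    and fin: "\<And>i. i \<in> I \<Longrightarrow> emeasure M (G i) < \<infinity>"
    and overlap: "\<And>i j. (i, j) \<in> overlap_rel I G \<Longrightarrow> 0 < emeasure M (G i \<inter> G j)"
  obtains K where "0 \<le> K"
    "\<And>u S i j. u \<in> borel_measurable M \<Longrightarrow> 0 \<le> S \<Longrightarrow>
       (\<And>i. i \<in> I \<Longrightarrow> (\<integral>\<^sup>+x\<in>G i. ennreal (\<bar>u x - mu_avg M u (G i)\<bar> powr s) \<partial>M) \<le> ennreal S) \<Longrightarrow>
       (i, j) \<in> (overlap_rel I G)\<^sup>* \<Longrightarrow> \<bar>mu_avg M u (G i) - mu_avg M u (G j)\<bar> powr s \<le> K * S"
proof -
  let ?R = "overlap_rel I G"
  have "finite ?R"
    using I by (auto intro: finite_subset[of _ "I \<times> I"] simp: overlap_rel_def)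
  \<comment> \<open>c bounds the jump of the averages across any overlap (up to the factor S^(1/s)),
     and a chain of overlaps needs at most card R steps.\<close>
  define c where "c = (\<Sum>(i, j)\<in>?R. (2 powr s / measure M (G i \<inter> G j)) powr (1 / s))"
  define N where "N = card ?R"
  have "0 \<le> c"
    unfolding c_def by (auto intro: sum_nonneg)
  moreover have "\<bar>mu_avg M u (G i) - mu_avg M u (G j)\<bar> powr s \<le> (N * c) powr s * S"
    if u: "u \<in> borel_measurable M" and S: "0 \<le> S" and ij: "(i, j) \<in> ?R\<^sup>*"
      and X: "\<And>i. i \<in> I \<Longrightarrow> (\<integral>\<^sup>+x\<in>G i. ennreal (\<bar>u x - mu_avg M u (G i)\<bar> powr s) \<partial>M) \<le> ennreal S"
    for u S i j
  proof -
    define A where "A i = mu_avg M u (G i)" for i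
    have step: "dist (A i) (A j) \<le> c * S powr (1 / s)" if ij: "(i, j) \<in> ?R" for i j
    proof -
      have "i \<in> I" "j \<in> I"
        using ij by (auto simp: overlap_rel_def)
      then have "emeasure M (G i \<inter> G j) < \<infinity>"
        using fin emeasure_mono[of "G i \<inter> G j" "G i" M] by (auto intro: le_less_trans)
      then have "\<bar>A i - A j\<bar> \<le> (2 powr s / measure M (G i \<inter> G j)) powr (1 / s) * S powr (1 / s)"
        unfolding A_def using \<open>i \<in> I\<close> \<open>j \<in> I\<close>
        by (intro abs_avg_diff_le_overlap[OF s u G G overlap[OF ij] _ S X X])
      also have "\<dots> \<le> c * S powr (1 / s)"
        unfolding c_def using \<open>finite ?R\<close>
        by (intro mult_right_mono member_le_sum[OF ij, of "\<lambda>(i, j). (2 powr s / measure M (G i \<inter> G j)) powr (1 / s)",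
              simplified]) auto
      finally show ?thesis
        by (simp add: dist_real_def)
    qed
    obtain n where "n \<le> N" "(i, j) \<in> ?R ^^ n"
      using ij \<open>finite ?R\<close> by (auto simp: rtrancl_finite_eq_relpow N_def)
    then have "dist (A i) (A j) \<le> n * (c * S powr (1 / s))"
      by (intro relpow_dist_le step)
    also have "\<dots> \<le> N * (c * S powr (1 / s))"
      using \<open>n \<le> N\<close> \<open>0 \<le> c\<close> by (intro mult_right_mono) auto
    finally have "\<bar>A i - A j\<bar> powr s \<le> (N * c * S powr (1 / s)) powr s"
      using s by (intro powr_mono2) (auto simp: dist_real_def mult.assoc)
    also have "\<dots> = (N * c) powr s * S"
      using s S by (simp add: powr_mult powr_powr)
    finally show ?thesis
      by (simp add: A_def)
  qed
  ultimately show ?thesis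
    using that[of "(N * c) powr s"] by auto
qed

lemma nn_set_integral_UN_powr_le:
  fixes u :: "'a \<Rightarrow> real"
  assumes s: "1 \<le> s" and I: "finite I"
    and G[measurable]: "\<And>i. i \<in> I \<Longrightarrow> G i \<in> sets M"
    and fin: "\<And>i. i \<in> I \<Longrightarrow> emeasure M (G i) < \<infinity>"
    and u[measurable]: "u \<in> borel_measurable M" and K: "0 \<le> K" and S: "0 \<le> S"
    and X: "\<And>i. i \<in> I \<Longrightarrow> (\<integral>\<^sup>+x\<in>G i. ennreal (\<bar>u x - mu_avg M u (G i)\<bar> powr s) \<partial>M) \<le> ennreal S"
    and avg: "\<And>i. i \<in> I \<Longrightarrow> \<bar>mu_avg M u (G i) - c\<bar> powr s \<le> K * S"
  shows "(\<integral>\<^sup>+x\<in>(\<Union>i\<in>I. G i). ennreal (\<bar>u x - c\<bar> powr s) \<partial>M)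
           \<le> ennreal ((\<Sum>i\<in>I. 2 powr (s - 1) * (1 + K * measure M (G i))) * S)"
proof -
  have piece: "(\<integral>\<^sup>+x\<in>G i. ennreal (\<bar>u x - c\<bar> powr s) \<partial>M)
      \<le> ennreal (2 powr (s - 1) * (1 + K * measure M (G i)) * S)" if i: "i \<in> I" for i
  proof -
    have "(\<integral>\<^sup>+x\<in>G i. ennreal (\<bar>u x - c\<bar> powr s) \<partial>M)
        \<le> ennreal (2 powr (s - 1)) * ((\<integral>\<^sup>+x\<in>G i. ennreal (\<bar>u x - mu_avg M u (G i)\<bar> powr s) \<partial>M)
            + ennreal (\<bar>mu_avg M u (G i) - c\<bar> powr s) * emeasure M (G i))"
      using i by (intro nn_set_integral_powr_shift_le[OF s u]) auto
    also have "\<dots> \<le> ennreal (2 powr (s - 1)) * (ennreal S + ennreal (K * S) * ennreal (measure M (G i)))"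
      using X[OF i] avg[OF i] fin[OF i]
      by (intro mult_left_mono add_mono) (auto simp: emeasure_eq_ennreal_measure intro!: mult_right_mono ennreal_leI)
    also have "\<dots> = ennreal (2 powr (s - 1) * (1 + K * measure M (G i)) * S)"
      using K S by (simp add: ennreal_mult[symmetric] ennreal_plus[symmetric] algebra_simps del: ennreal_plus)
    finally show ?thesis .
  qed
  have "(\<integral>\<^sup>+x\<in>(\<Union>i\<in>I. G i). ennreal (\<bar>u x - c\<bar> powr s) \<partial>M)
      \<le> (\<Sum>i\<in>I. \<integral>\<^sup>+x\<in>G i. ennreal (\<bar>u x - c\<bar> powr s) \<partial>M)"
    using I by (intro nn_set_integral_UN_le) auto
  also have "\<dots> \<le> (\<Sum>i\<in>I. ennreal (2 powr (s - 1) * (1 + K * measure M (G i)) * S))"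
    by (intro sum_mono piece)
  also have "\<dots> = ennreal ((\<Sum>i\<in>I. 2 powr (s - 1) * (1 + K * measure M (G i))) * S)"
    using K S by (simp add: sum_ennreal sum_distrib_right)
  finally show ?thesis .
qed

lemma nn_set_integral_osc_UN_le:
  fixes M :: "'a measure" and G :: "'i \<Rightarrow> 'a set" and s :: real
  assumes s: "1 \<le> s" and I: "finite I" "i0 \<in> I"
    and G[measurable]: "\<And>i. i \<in> I \<Longrightarrow> G i \<in> sets M"
    and fin: "emeasure M (\<Union>i\<in>I. G i) < \<infinity>"
    and overlap: "\<And>i j. (i, j) \<in> overlap_rel I G \<Longrightarrow> 0 < emeasure M (G i \<inter> G j)"
    and chain: "\<And>i. i \<in> I \<Longrightarrow> (i, i0) \<in> (overlap_rel I G)\<^sup>*"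
  obtains D where "0 < D"
    "\<And>u S. u \<in> borel_measurable M \<Longrightarrow> 0 \<le> S \<Longrightarrow>
       (\<And>i. i \<in> I \<Longrightarrow> (\<integral>\<^sup>+x\<in>G i. ennreal (\<bar>u x - mu_avg M u (G i)\<bar> powr s) \<partial>M) \<le> ennreal S) \<Longrightarrow>
       (\<integral>\<^sup>+x\<in>(\<Union>i\<in>I. G i). ennreal (\<bar>u x - mu_avg M u (\<Union>i\<in>I. G i)\<bar> powr s) \<partial>M)
         \<le> ennreal (D * S)"
proof -
  let ?\<Omega> = "\<Union>i\<in>I. G i"
  have \<Omega>: "?\<Omega> \<in> sets M"
    using I by auto
  then have finG: "emeasure M (G i) < \<infinity>" if "i \<in> I" for i
    using fin emeasure_mono[of "G i" ?\<Omega> M] that by (auto intro: le_less_trans)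
  obtain K where "0 \<le> K" and K: "\<And>u S i j. u \<in> borel_measurable M \<Longrightarrow> 0 \<le> S \<Longrightarrow>
       (\<And>i. i \<in> I \<Longrightarrow> (\<integral>\<^sup>+x\<in>G i. ennreal (\<bar>u x - mu_avg M u (G i)\<bar> powr s) \<partial>M) \<le> ennreal S) \<Longrightarrow>
       (i, j) \<in> (overlap_rel I G)\<^sup>* \<Longrightarrow> \<bar>mu_avg M u (G i) - mu_avg M u (G j)\<bar> powr s \<le> K * S"
    using avg_powr_diff_le_chain[of s I G M, OF s I(1) G finG overlap] by blast
  define D where "D = 2 powr s * (\<Sum>i\<in>I. 2 powr (s - 1) * (1 + K * measure M (G i)))"
  have "0 < D"
    unfolding D_def using I \<open>0 \<le> K\<close> by (intro mult_pos_pos sum_pos add_pos_nonneg) auto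
  moreover have "(\<integral>\<^sup>+x\<in>?\<Omega>. ennreal (\<bar>u x - mu_avg M u ?\<Omega>\<bar> powr s) \<partial>M) \<le> ennreal (D * S)"
    if u[measurable]: "u \<in> borel_measurable M" and S: "0 \<le> S"
      and X: "\<And>i. i \<in> I \<Longrightarrow> (\<integral>\<^sup>+x\<in>G i. ennreal (\<bar>u x - mu_avg M u (G i)\<bar> powr s) \<partial>M) \<le> ennreal S"
    for u S
  proof -
    let ?c = "mu_avg M u (G i0)"
    have "(\<integral>\<^sup>+x\<in>?\<Omega>. ennreal (\<bar>u x - ?c\<bar> powr s) \<partial>M)
        \<le> ennreal ((\<Sum>i\<in>I. 2 powr (s - 1) * (1 + K * measure M (G i))) * S)"
      using K[OF u S X chain] X by (intro nn_set_integral_UN_powr_le[OF s I(1) G finG u \<open>0 \<le> K\<close> S])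
    then have "ennreal (2 powr s) * (\<integral>\<^sup>+x\<in>?\<Omega>. ennreal (\<bar>u x - ?c\<bar> powr s) \<partial>M) \<le> ennreal (D * S)"
      unfolding D_def by (simp add: ennreal_mult' mult.assoc mult_left_mono)
    then show ?thesis
      by (rule order_trans[OF nn_set_integral_osc_le[OF s u \<Omega> fin]])
  qed
  ultimately show ?thesis
    using that by blast
qed

lemma mu_osc_UN_le:
  fixes M :: "'a measure" and G :: "'i \<Rightarrow> 'a set" and s :: real
  assumes s: "1 \<le> s" and I: "finite I" "i0 \<in> I"
    and G: "\<And>i. i \<in> I \<Longrightarrow> G i \<in> sets M"
    and overlap: "\<And>i j. (i, j) \<in> overlap_rel I G \<Longrightarrow> 0 < emeasure M (G i \<inter> G j)"
    and chain: "\<And>i. i \<in> I \<Longrightarrow> (i, i0) \<in> (overlap_rel I G)\<^sup>*"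
  obtains D where "0 < D"
    "\<And>u. u \<in> borel_measurable M \<Longrightarrow>
       mu_osc M s u (\<Union>i\<in>I. G i) \<le> ennreal D * (SUP i\<in>I. mu_osc M s u (G i))"
proof (cases "emeasure M (\<Union>i\<in>I. G i) < \<infinity>")
  case False
  \<comment> \<open>Then every oscillation over the union is a quotient by \<infinity>, i.e. 0.\<close>
  then have "mu_osc M s u (\<Union>i\<in>I. G i) = 0" for u
    by (simp add: mu_osc_def less_top[symmetric])
  then show ?thesis
    using that[of 1] by simp
next
  case True
  let ?\<Omega> = "\<Union>i\<in>I. G i"
  obtain D where D: "0 < D" and bound: "\<And>u S. u \<in> borel_measurable M \<Longrightarrow> 0 \<le> S \<Longrightarrow>
       (\<And>i. i \<in> I \<Longrightarrow> (\<integral>\<^sup>+x\<in>G i. ennreal (\<bar>u x - mu_avg M u (G i)\<bar> powr s) \<partial>M) \<le> ennreal S) \<Longrightarrow>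
       (\<integral>\<^sup>+x\<in>?\<Omega>. ennreal (\<bar>u x - mu_avg M u ?\<Omega>\<bar> powr s) \<partial>M) \<le> ennreal (D * S)"
    using nn_set_integral_osc_UN_le[OF s I G True overlap chain] by blast
  define m where "m = measure M ?\<Omega>"
  have \<Omega>: "?\<Omega> \<in> sets M" "emeasure M ?\<Omega> = ennreal m"
    using I G True by (auto simp: m_def emeasure_eq_ennreal_measure)
  have "mu_osc M s u ?\<Omega> \<le> ennreal D * T"
    if u: "u \<in> borel_measurable M" and T: "T = (SUP i\<in>I. mu_osc M s u (G i))" for u T
  proof (cases "T = \<infinity>")
    case True
    then show ?thesis
      using D by (simp add: ennreal_mult_top)
  next
    case False
    define S where "S = enn2real T"
    have S: "T = ennreal S" "0 \<le> S"
      using False by (simp_all add: S_def ennreal_enn2real_if)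
    have pieces: "(\<integral>\<^sup>+x\<in>G i. ennreal (\<bar>u x - mu_avg M u (G i)\<bar> powr s) \<partial>M) \<le> ennreal (S * m)"
      if i: "i \<in> I" for i
    proof -
      have "emeasure M (G i) \<le> emeasure M ?\<Omega>"
        using i \<Omega>(1) by (intro emeasure_mono) auto
      then have "(\<integral>\<^sup>+x\<in>G i. ennreal (\<bar>u x - mu_avg M u (G i)\<bar> powr s) \<partial>M)
          = mu_osc M s u (G i) * emeasure M (G i)"
        using i True G by (intro nn_set_integral_osc_eq) auto
      also have "\<dots> \<le> T * ennreal m"
        using i \<open>emeasure M (G i) \<le> emeasure M ?\<Omega>\<close> \<Omega>(2)
        unfolding T by (intro mult_mono SUP_upper) auto
      finally show ?thesis
        using S by (simp add: ennreal_mult')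
    qed
    have "(\<integral>\<^sup>+x\<in>?\<Omega>. ennreal (\<bar>u x - mu_avg M u ?\<Omega>\<bar> powr s) \<partial>M) \<le> ennreal (D * (S * m))"
      using S(2) by (intro bound[OF u _ pieces]) (auto simp: m_def)
    then have "mu_osc M s u ?\<Omega> \<le> ennreal (D * S)"
      using True D S(2) by (intro mu_osc_le_of_nn_set_integral_le) (auto simp: m_def mult.assoc)
    also have "\<dots> = ennreal D * T"
      unfolding S(1) using D S(2) by (intro ennreal_mult) auto
    finally show ?thesis .
  qed
  then show ?thesis
    using that[of D] D by simp
qed

lemma mu_osc_UN_le_open:
  fixes M :: "'a::topological_space measure" and G :: "'i \<Rightarrow> 'a set" and s :: real
  assumes s: "1 \<le> s" and I: "finite I" "I \<noteq> {}"
    and G: "\<And>i. i \<in> I \<Longrightarrow> G i \<in> sets M" "\<And>i. i \<in> I \<Longrightarrow> open (G i)" "\<And>i. i \<in> I \<Longrightarrow> G i \<noteq> {}"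
    and conn: "connected (\<Union>i\<in>I. G i)"
    and pos: "\<And>A. open A \<Longrightarrow> A \<noteq> {} \<Longrightarrow> A \<subseteq> (\<Union>i\<in>I. G i) \<Longrightarrow> 0 < emeasure M A"
  obtains D where "0 < D"
    "\<And>u. u \<in> borel_measurable M \<Longrightarrow>
       mu_osc M s u (\<Union>i\<in>I. G i) \<le> ennreal D * (SUP i\<in>I. mu_osc M s u (G i))"
proof -
  obtain i0 where "i0 \<in> I"
    using I by blast
  have overlap: "0 < emeasure M (G i \<inter> G j)" if "(i, j) \<in> overlap_rel I G" for i j
    using that G(2) by (intro pos) (auto simp: overlap_rel_def)
  have chain: "(i, i0) \<in> (overlap_rel I G)\<^sup>*" if "i \<in> I" for i
    using connected_UN_imp_overlap_chain[OF conn G(2,3) that \<open>i0 \<in> I\<close>] .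
  show ?thesis
    using mu_osc_UN_le[of s I i0 G M, OF s I(1) \<open>i0 \<in> I\<close> G(1) overlap chain] that by blast
qed

section \<open>The weighted measure\<close>

lemma borel_measurable_indicator_mult_cover:
  fixes f :: "'a \<Rightarrow> real"
  assumes \<C>: "countable \<C>" "\<Union>\<C> = \<Omega>" "\<And>K. K \<in> \<C> \<Longrightarrow> K \<in> sets M"
    and f: "\<And>K. K \<in> \<C> \<Longrightarrow> set_integrable M K f"
  shows "(\<lambda>x. indicator \<Omega> x * f x) \<in> borel_measurable M"
proof (rule measurable_piecewise_restrict[where C = "insert (space M - \<Omega>) \<C>"])
  have "\<Omega> \<in> sets M"
    using \<C> by auto
  then show "K \<inter> space M \<in> sets M" if "K \<in> insert (space M - \<Omega>) \<C>" for K
    using that \<C>(3) by auto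
  show "countable (insert (space M - \<Omega>) \<C>)" "space M \<subseteq> \<Union>(insert (space M - \<Omega>) \<C>)"
    using \<C> by auto
  show "(\<lambda>x. indicator \<Omega> x * f x) \<in> borel_measurable (restrict_space M K)"
    if K: "K \<in> insert (space M - \<Omega>) \<C>" for K
  proof (cases "K \<in> \<C>")
    case True
    then have "(\<lambda>x. indicator K x * f x) \<in> borel_measurable M"
      using f unfolding set_integrable_def by (simp add: borel_measurable_integrable)
    moreover have "x \<in> K \<Longrightarrow> indicator \<Omega> x * f x = indicator K x * f x" for x
      using True \<C>(2) by (auto split: split_indicator)
    ultimately show ?thesis
      by (subst measurable_cong[where g = "\<lambda>x. indicator K x * f x"])
         (auto simp: space_restrict_space intro: measurable_restrict_space1)
  next
    case False
    then have "x \<in> K \<Longrightarrow> indicator \<Omega> x * f x = 0" for x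
      using K by auto
    then show ?thesis
      by (subst measurable_cong[where g = "\<lambda>_. 0"]) (auto simp: space_restrict_space)
  qed
qed

lemma loc_integrable_borel_measurable:
  fixes u :: "'a::euclidean_space \<Rightarrow> real"
  assumes u: "loc_integrable M \<Omega> u" and "open \<Omega>" and sets: "sets M = sets lebesgue"
  shows "(\<lambda>x. indicator \<Omega> x * u x) \<in> borel_measurable M"
proof -
  obtain C :: "nat \<Rightarrow> 'a set" where C: "\<And>n. compact (C n)" "\<And>n. C n \<subseteq> \<Omega>" "\<Union>(range C) = \<Omega>"
    using open_Union_compact_subsets[OF \<open>open \<Omega>\<close>] by metis
  have "C n \<in> sets M" for n
    using C(1) sets by (simp add: compact_imp_closed borel_closed)
  then show ?thesis
    using C u unfolding loc_integrable_def
    by (intro borel_measurable_indicator_mult_cover[of "range C"]) auto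
qed

lemma A_r_weight_borel_measurable:
  assumes w: "A_r_weight r \<Omega> w" and "open \<Omega>"
  shows "(\<lambda>x. indicator \<Omega> x * w x) \<in> borel_measurable lebesgue"
proof -
  have "open B" if "B \<in> balls_in \<Omega>" for B
    using that unfolding balls_in_def by auto
  then obtain \<C> where \<C>: "\<C> \<subseteq> balls_in \<Omega>" "countable \<C>" "\<Union>\<C> = \<Union>(balls_in \<Omega>)"
    using Lindelof by blast
  have "\<Union>(balls_in \<Omega>) = \<Omega>"
  proof
    show "\<Union>(balls_in \<Omega>) \<subseteq> \<Omega>"
      unfolding balls_in_def by blast
    show "\<Omega> \<subseteq> \<Union>(balls_in \<Omega>)"
    proof
      fix x assume "x \<in> \<Omega>"
      then obtain e where e: "0 < e" "ball x e \<subseteq> \<Omega>"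
        using \<open>open \<Omega>\<close> openE by blast
      then have "ball x e \<in> balls_in \<Omega>"
        unfolding balls_in_def by blast
      moreover have "x \<in> ball x e"
        using e by simp
      ultimately show "x \<in> \<Union>(balls_in \<Omega>)"
        by blast
    qed
  qed
  moreover have "B \<in> sets lebesgue" "set_integrable lebesgue B w" if "B \<in> \<C>" for B
  proof -
    have B: "B \<in> balls_in \<Omega>"
      using that \<C>(1) by blast
    then show "B \<in> sets lebesgue"
      using \<open>\<And>B. B \<in> balls_in \<Omega> \<Longrightarrow> open B\<close> by simp
    show "set_integrable lebesgue B w"
      using w B unfolding A_r_weight_def by blast
  qed
  ultimately show ?thesis
    using \<C>(2,3) by (intro borel_measurable_indicator_mult_cover[of \<C>]) simp_all
qed

lemma emeasure_weighted_measure_pos: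
  fixes A :: "'a::euclidean_space set"
  assumes w: "A_r_weight r \<Omega> w" and "open \<Omega>" and A: "open A" "A \<noteq> {}" "A \<subseteq> \<Omega>"
  shows "0 < emeasure (weighted_measure \<Omega> w) A"
proof (rule ccontr)
  let ?f = "\<lambda>x. ennreal (indicator \<Omega> x * w x)"
  assume "\<not> 0 < emeasure (weighted_measure \<Omega> w) A"
  moreover have "?f \<in> borel_measurable lebesgue"
    using A_r_weight_borel_measurable[OF w \<open>open \<Omega>\<close>] by measurable
  moreover have [measurable]: "A \<in> sets lebesgue"
    using A by simp
  ultimately have "(\<integral>\<^sup>+x\<in>A. ?f x \<partial>lebesgue) = 0"
    by (simp add: weighted_measure_def emeasure_density)
  then have "AE x in lebesgue. ?f x * indicator A x = 0"
    using A_r_weight_borel_measurable[OF w \<open>open \<Omega>\<close>] by (subst (asm) nn_integral_0_iff_AE) auto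
  moreover have "AE x in lebesgue. x \<in> \<Omega> \<longrightarrow> 0 < w x"
    using w unfolding A_r_weight_def by blast
  ultimately have "AE x in lebesgue. x \<notin> A"
  proof eventually_elim
    case (elim x)
    show ?case
    proof
      assume "x \<in> A"
      then have "0 < w x" "x \<in> \<Omega>"
        using elim(2) A(3) by auto
      then show False
        using elim(1) \<open>x \<in> A\<close> by simp
    qed
  qed
  then have "A \<in> null_sets lebesgue"
    using AE_iff_null_sets[of A lebesgue] A by simp
  then have "negligible A"
    by (simp add: negligible_iff_null_sets)
  then show False
    using open_not_negligible A by blast
qed

lemma mu_osc_indicator_mult:
  assumes "E \<subseteq> \<Omega>"
  shows "mu_osc M s (\<lambda>x. indicator \<Omega> x * u x) E = mu_osc M s u E"
proof -
  have avg: "mu_avg M (\<lambda>x. indicator \<Omega> x * u x) E = mu_avg M u E"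
    unfolding mu_avg_def set_lebesgue_integral_def
    by (rule arg_cong2[where f = "(/)"], rule Bochner_Integration.integral_cong)
       (use assms in \<open>auto split: split_indicator\<close>)
  show ?thesis
    unfolding mu_osc_def avg
    by (rule arg_cong2[where f = "(/)"], rule nn_integral_cong)
       (use assms in \<open>auto split: split_indicator\<close>)
qed

lemma Ls_averaging_domains_uniform_const:
  assumes I: "finite I" and G: "\<And>i. i \<in> I \<Longrightarrow> Ls_averaging_domain M s (G i)"
  obtains K where "0 \<le> K"
    "\<And>i u. i \<in> I \<Longrightarrow> loc_integrable M (G i) u \<Longrightarrow>
       mu_osc M s u (G i) \<le> ennreal K * (SUP B\<in>balls_in (G i). mu_osc M s u B)"
proof -
  have "\<forall>i\<in>I. \<exists>C\<ge>0. \<forall>u. loc_integrable M (G i) u \<longrightarrow>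
      mu_osc M s u (G i) \<le> ennreal (C powr s) * (SUP B\<in>balls_in (G i). mu_osc M s u B)"
    using G by (simp add: Ls_averaging_domain_def)
  then obtain C where C: "\<And>i u. i \<in> I \<Longrightarrow> loc_integrable M (G i) u \<Longrightarrow>
      mu_osc M s u (G i) \<le> ennreal (C i powr s) * (SUP B\<in>balls_in (G i). mu_osc M s u B)"
    by metis
  show ?thesis
  proof (rule that[of "\<Sum>i\<in>I. C i powr s"])
    show "0 \<le> (\<Sum>i\<in>I. C i powr s)"
      by (simp add: sum_nonneg)
    fix i u assume i: "i \<in> I" and u: "loc_integrable M (G i) u"
    have "ennreal (C i powr s) \<le> ennreal (\<Sum>i\<in>I. C i powr s)"
      using I i by (intro ennreal_leI member_le_sum) auto
    then show "mu_osc M s u (G i) \<le> ennreal (\<Sum>i\<in>I. C i powr s) * (SUP B\<in>balls_in (G i). mu_osc M s u B)"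
      using C[OF i u] by (meson mult_right_mono order_trans zero_le)
  qed
qed

lemma Ls_averaging_domain_UN:
  fixes M :: "'a::euclidean_space measure" and G :: "'i \<Rightarrow> 'a set" and s :: real
  assumes s: "1 \<le> s" and I: "finite I" "I \<noteq> {}" and sets_M: "sets M = sets lebesgue"
    and conn: "connected (\<Union>i\<in>I. G i)"
    and pos: "\<And>A. open A \<Longrightarrow> A \<noteq> {} \<Longrightarrow> A \<subseteq> (\<Union>i\<in>I. G i) \<Longrightarrow> 0 < emeasure M A"
    and G: "\<And>i. i \<in> I \<Longrightarrow> Ls_averaging_domain M s (G i)"
  shows "Ls_averaging_domain M s (\<Union>i\<in>I. G i)"
proof -
  let ?\<Omega> = "\<Union>i\<in>I. G i"
  have G_open: "open (G i)" and G_ne: "G i \<noteq> {}" and G_bdd: "bounded (G i)" if "i \<in> I" for i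
    using G[OF that] by (simp_all add: Ls_averaging_domain_def)
  obtain K where "0 \<le> K" and K: "\<And>i u. i \<in> I \<Longrightarrow> loc_integrable M (G i) u \<Longrightarrow>
      mu_osc M s u (G i) \<le> ennreal K * (SUP B\<in>balls_in (G i). mu_osc M s u B)"
    using Ls_averaging_domains_uniform_const[of I M s G, OF I(1) G] by blast
  obtain D where "0 < D" and D: "\<And>u. u \<in> borel_measurable M \<Longrightarrow>
      mu_osc M s u ?\<Omega> \<le> ennreal D * (SUP i\<in>I. mu_osc M s u (G i))"
    using mu_osc_UN_le_open[of s I G M, OF s I _ G_open G_ne conn pos] G_open sets_M by auto
  have "mu_osc M s u ?\<Omega> \<le> ennreal (((D * K) powr (1 / s)) powr s) * (SUP B\<in>balls_in ?\<Omega>. mu_osc M s u B)"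
    if u: "loc_integrable M ?\<Omega> u" for u
  proof -
    \<comment> \<open>u need not be measurable off \<Omega>, where the oscillations do not see it.\<close>
    let ?v = "\<lambda>x. indicator ?\<Omega> x * u x" and ?T = "SUP B\<in>balls_in ?\<Omega>. mu_osc M s u B"
    have "mu_osc M s ?v (G i) \<le> ennreal K * ?T" if i: "i \<in> I" for i
    proof -
      have "mu_osc M s ?v (G i) = mu_osc M s u (G i)"
        using i by (intro mu_osc_indicator_mult) auto
      also have "\<dots> \<le> ennreal K * (SUP B\<in>balls_in (G i). mu_osc M s u B)"
        using u i by (intro K) (auto simp: loc_integrable_def)
      also have "\<dots> \<le> ennreal K * ?T"
        using i by (intro mult_left_mono SUP_subset_mono) (auto simp: balls_in_def)
      finally show ?thesis .
    qed
    then have pieces: "(SUP i\<in>I. mu_osc M s ?v (G i)) \<le> ennreal K * ?T"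
      by (rule SUP_least)
    have "mu_osc M s u ?\<Omega> = mu_osc M s ?v ?\<Omega>"
      by (simp add: mu_osc_indicator_mult)
    also have "\<dots> \<le> ennreal D * (ennreal K * ?T)"
      using G_open u sets_M pieces
      by (intro order_trans[OF D mult_left_mono] loc_integrable_borel_measurable) auto
    also have "\<dots> = ennreal (((D * K) powr (1 / s)) powr s) * ?T"
      using s \<open>0 < D\<close> \<open>0 \<le> K\<close> by (simp add: powr_powr ennreal_mult mult.assoc)
    finally show ?thesis .
  qed
  then show ?thesis
    unfolding Ls_averaging_domain_def
    using conn I G_open G_ne G_bdd by (intro conjI exI[of _ "(D * K) powr (1 / s)"]) auto
qed

theorem mainTheorem12:
  fixes G :: "nat \<Rightarrow> 'a::euclidean_space set" and m :: nat
    and s r :: real and w :: "'a \<Rightarrow> real"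
  assumes "1 \<le> s" and "1 < r" and "1 \<le> m"
    and "connected (\<Union>i\<in>{1..m}. G i)"
    and "A_r_weight r (\<Union>i\<in>{1..m}. G i) w"
    and "\<forall>i\<in>{1..m}. Ls_averaging_domain (weighted_measure (\<Union>i\<in>{1..m}. G i) w) s (G i)"
  shows "Ls_averaging_domain (weighted_measure (\<Union>i\<in>{1..m}. G i) w) s (\<Union>i\<in>{1..m}. G i)"
proof (rule Ls_averaging_domain_UN)
  have "open (\<Union>i\<in>{1..m}. G i)"
    using assms(6) by (auto simp: Ls_averaging_domain_def)
  then show "0 < emeasure (weighted_measure (\<Union>i\<in>{1..m}. G i) w) A"
    if "open A" "A \<noteq> {}" "A \<subseteq> (\<Union>i\<in>{1..m}. G i)" for A
    using emeasure_weighted_measure_pos[OF assms(5) _ that] by blast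
qed (use assms in \<open>auto simp: weighted_measure_def\<close>)

end
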